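(* Let $r>0$, $V_T>0$ and $R_0\ge r$. Define $$f(t,V_s)=1+\frac{1}{2R_0(R_0+r)}\left(r^2-V_T^2\left(\frac{2\pi R_0}{V_s}+t\right)^2\right)-\cos\!\left(\frac{V_s t}{R_0}\right)$$ and $$V_{s_2}=\frac{\pi R_0V_T(R_0+r)+V_T\sqrt{R_0(R_0+r)\left[\pi^2R_0(R_0+r)+r^2\right]}}{r(R_0+r)}.$$ Then the minimum of $t\mapsto f(t,V_{s_2})$ over $0\le t\le\frac{\pi R_0}{2V_{s_2}}$ is strictly positive, that is, $f(t^*,V_{s_2})>0$ at the minimizer $t^*$. In particular $f(t,V_{s_2})\ge 0$ for all $t\in\left[0,\frac{\pi R_0}{2V_{s_2}}\right]$.
   Context: $R_0$ is the initial radius of the disk containing the evaders, $2r$ is the length of the sweeper's line sensor, $V_T$ is the maximal evader speed, and $V_{s_2}$ is a candidate sweeper speed. The condition $f(t,V_s)\ge 0$ for $0\le t\le\pi R_0/(2V_s)$ is the paper's criterion for the sweeper to be fast enough to accomplish the confinement task. *)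

theory Defs
  imports Complex_Main
begin

definition sweep_f :: "real \<Rightarrow> real \<Rightarrow> real \<Rightarrow> real \<Rightarrow> real \<Rightarrow> real" where
  "sweep_f R\<^sub>0 r V\<^sub>T t V\<^sub>s =
     1 + (r\<^sup>2 - V\<^sub>T\<^sup>2 * (2 * pi * R\<^sub>0 / V\<^sub>s + t)\<^sup>2) / (2 * R\<^sub>0 * (R\<^sub>0 + r))
       - cos (V\<^sub>s * t / R\<^sub>0)"

definition V_s2 :: "real \<Rightarrow> real \<Rightarrow> real \<Rightarrow> real" where
  "V_s2 R\<^sub>0 r V\<^sub>T =
     (pi * R\<^sub>0 * V\<^sub>T * (R\<^sub>0 + r)
      + V\<^sub>T * sqrt (R\<^sub>0 * (R\<^sub>0 + r) * (pi\<^sup>2 * R\<^sub>0 * (R\<^sub>0 + r) + r\<^sup>2)))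
     / (r * (R\<^sub>0 + r))"

end

theory Submission
  imports Defs
begin

(* With s = V t / R0 and e = R0 VT^2 / ((R0 + r) V^2) one has
   f(t, V) = 1 - cos s + e/2 ((V r / (VT R0))^2 - (2 pi + s)^2).
   V_s2 is the positive root of r (R0 + r) V^2 - 2 pi R0 (R0 + r) VT V - R0 r VT^2 = 0,
   which says exactly V r / (VT R0) = 2 pi / (1 - e); and V_s2 >= 2 pi R0 VT / r,
   so e <= 1 / (8 pi^2) < 1/6 when R0 >= r.  For s in [0, pi/2] the bounds
   1 - cos s >= s^2/3 and 1/(1 - e)^2 >= 1 + 2 e then give
   f >= (s/2 - 2 pi e)^2 + (1/12 - e/2) s^2 > 0, and the minimum of the continuous
   function f on the compact interval is attained. *)

lemma cos_le_Maclaurin_4: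
  fixes x :: real
  assumes "0 \<le> x"
  shows "cos x \<le> 1 - x^2/2 + x^4/24"
proof (cases "x = 0")
  case False
  with assms have "0 < x" by simp
  from Maclaurin_cos_expansion2[OF this, of 4] obtain t where
    "cos x = (\<Sum>m<4. cos_coeff m * x ^ m) + cos (t + 1/2 * real 4 * pi) / fact 4 * x ^ 4"
    by auto
  moreover have "(\<Sum>m<4. cos_coeff m * x ^ m) = 1 - x^2/2"
    by (simp add: eval_nat_numeral cos_coeff_def) presburger
  moreover have "cos (t + 1/2 * real 4 * pi) * x ^ 4 \<le> 1 * x ^ 4"
    by (intro mult_right_mono) simp_all
  then have "cos (t + 1/2 * real 4 * pi) / fact 4 * x ^ 4 \<le> x^4/24"
    by (simp add: fact_numeral)
  ultimately show ?thesis by linarith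
qed simp

lemma one_minus_cos_ge_square:
  fixes s :: real
  assumes "0 \<le> s" "s \<le> 2"
  shows "s^2/3 \<le> 1 - cos s"
proof -
  have "s^2 \<le> 2^2" using assms by (intro power_mono)
  then have "s^2 * s^2 \<le> 4 * s^2"
    by (intro mult_right_mono) simp_all
  then have "s^4/24 \<le> s^2/6"
    by (simp add: power4_eq_xxxx power2_eq_square)
  with cos_le_Maclaurin_4[OF assms(1)] show ?thesis by linarith
qed

lemma cos_margin_pos:
  fixes e s :: real
  assumes "0 < e" "e < 1/6" "0 \<le> s" "s \<le> 2"
  shows "0 < 1 - cos s + e/2 * ((2*pi/(1-e))^2 - (2*pi + s)^2)"
proof -
  have "(1 + 2*e) * (1-e)^2 \<le> 1"
    using assms by (simp add: power2_eq_square algebra_simps)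
  then have "1 + 2*e \<le> 1/(1-e)^2"
    using assms by (simp add: field_simps)
  then have "4*pi^2*(1 + 2*e) \<le> 4*pi^2 * (1/(1-e)^2)"
    by (intro mult_left_mono) simp_all
  then have "4*pi^2*(1 + 2*e) \<le> (2*pi/(1-e))^2"
    by (simp add: power_divide)
  then have "e/2 * (8*pi^2*e - 4*pi*s - s^2) \<le> e/2 * ((2*pi/(1-e))^2 - (2*pi + s)^2)"
    using assms by (intro mult_left_mono) (simp_all add: power2_eq_square algebra_simps)
  moreover have "s^2/3 + e/2 * (8*pi^2*e - 4*pi*s - s^2) = (s/2 - 2*pi*e)^2 + (1/12 - e/2) * s^2"
    by (simp add: power2_eq_square algebra_simps)
  moreover have "0 < (s/2 - 2*pi*e)^2 + (1/12 - e/2) * s^2"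
    using assms by (cases "s = 0") (simp_all add: add_nonneg_pos add_pos_nonneg)
  ultimately show ?thesis
    using one_minus_cos_ge_square[OF assms(3,4)] by linarith
qed

definition sweep_eps :: "real \<Rightarrow> real \<Rightarrow> real \<Rightarrow> real \<Rightarrow> real" where
  "sweep_eps R r W V = R*W^2/((R+r)*V^2)"

lemma sweep_f_eq:
  fixes R r W V t :: real
  assumes "R \<noteq> 0" "R + r \<noteq> 0" "W \<noteq> 0" "V \<noteq> 0"
  shows "sweep_f R r W t V
           = 1 - cos (V*t/R) + sweep_eps R r W V/2 * ((V*r/(W*R))^2 - (2*pi + V*t/R)^2)"
  using assms unfolding sweep_f_def sweep_eps_def by (simp add: divide_simps power2_eq_square) algebra

lemma V_s2_quadratic:
  fixes R r W :: real
  assumes "0 < r" "0 \<le> R"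
  defines "V \<equiv> V_s2 R r W"
  shows "r*(R+r)*V^2 - 2*pi*R*(R+r)*W*V - R*r*W^2 = 0"
proof -
  define D where "D = R*(R+r)*(pi^2*R*(R+r) + r^2)"
  have "V*(r*(R+r)) = pi*R*W*(R+r) + W*sqrt D"
    using assms unfolding V_def V_s2_def D_def by simp
  moreover have "(sqrt D)^2 = D"
    using assms unfolding D_def by simp
  ultimately have "(V*(r*(R+r)) - pi*R*W*(R+r))^2 = W^2*D"
    by (simp add: power_mult_distrib)
  then have "r*(R+r)*(r*(R+r)*V^2 - 2*pi*R*(R+r)*W*V - R*r*W^2) = 0"
    unfolding D_def by (simp add: power2_eq_square algebra_simps)
  then show ?thesis using assms by simp
qed

lemma V_s2_ge:
  fixes R r W :: real
  assumes "0 < r" "0 \<le> R" "0 \<le> W"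
  shows "2*pi*R*W/r \<le> V_s2 R r W"
proof -
  have "pi*R*(R+r) \<le> sqrt (R*(R+r)*(pi^2*R*(R+r) + r^2))"
    using assms by (intro real_le_rsqrt) (simp add: power2_eq_square algebra_simps)
  then have "W*(pi*R*(R+r)) \<le> W*sqrt (R*(R+r)*(pi^2*R*(R+r) + r^2))"
    using assms by (intro mult_left_mono)
  then have "2*pi*R*W*(R+r) \<le> pi*R*W*(R+r) + W*sqrt (R*(R+r)*(pi^2*R*(R+r) + r^2))"
    by (simp add: algebra_simps)
  then have "2*pi*R*W*(R+r)/(r*(R+r))
      \<le> (pi*R*W*(R+r) + W*sqrt (R*(R+r)*(pi^2*R*(R+r) + r^2)))/(r*(R+r))"
    using assms by (intro divide_right_mono) simp_all
  moreover have "2*pi*R*W*(R+r)/(r*(R+r)) = 2*pi*R*W/r"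
    using assms by simp
  ultimately show ?thesis
    unfolding V_s2_def by (simp add: mult.assoc)
qed

lemma V_s2_pos:
  fixes R r W :: real
  assumes "0 < r" "0 < R" "0 < W"
  shows "0 < V_s2 R r W"
  using assms by (intro less_le_trans[OF _ V_s2_ge]) simp_all

lemma sweep_eps_V_s2_less:
  fixes R r W :: real
  assumes "0 < r" "r \<le> R" "0 < W"
  shows "sweep_eps R r W (V_s2 R r W) < 1/6"
proof -
  define V where "V = V_s2 R r W"
  have "0 < R" "0 < V" using assms V_s2_pos[of r R W] by (simp_all add: V_def)
  have "2*pi*R*W \<le> V*r"
    using V_s2_ge[of r R W] assms unfolding V_def by (simp add: divide_le_eq mult.commute)
  then have sq: "(2*pi*R*W)^2 \<le> (V*r)^2"
    using assms \<open>0 < R\<close> by (intro power_mono) simp_all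
  then have "R*W^2 * (4*pi^2*R*(R+r)) \<le> r^2 * ((R+r)*V^2)"
    using mult_right_mono[OF sq, of "R+r"] assms
    by (simp add: power_mult_distrib power2_eq_square algebra_simps)
  then have "R*W^2/((R+r)*V^2) \<le> r^2/(4*pi^2*R*(R+r))"
    using assms \<open>0 < R\<close> \<open>0 < V\<close> by (simp add: divide_simps)
  also have "\<dots> \<le> 1/(8*pi^2)"
  proof -
    have "r*r \<le> R*R" "r*r \<le> R*r"
      using assms by (auto intro: mult_mono)
    then have "2*r^2 \<le> R*(R+r)"
      by (simp add: power2_eq_square algebra_simps)
    then show ?thesis
      using assms by (simp add: divide_simps)
  qed
  also have "\<dots> < 1/6"
  proof -
    have "2^2 \<le> pi^2"
      using pi_ge_two by (intro power_mono) simp_all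
    then show ?thesis by (simp add: divide_simps)
  qed
  finally show ?thesis by (simp add: V_def sweep_eps_def)
qed

lemma sweep_f_V_s2:
  fixes R r W t :: real
  assumes "0 < r" "0 < R" "0 < W"
  defines "V \<equiv> V_s2 R r W" and "e \<equiv> sweep_eps R r W (V_s2 R r W)"
  shows "sweep_f R r W t V = 1 - cos (V*t/R) + e/2 * ((2*pi/(1-e))^2 - (2*pi + V*t/R)^2)"
proof -
  have "0 < V" using V_s2_pos assms by (simp add: V_def)
  have "e * ((R+r)*V^2) = R*W^2"
    using assms \<open>0 < V\<close> unfolding e_def V_def[symmetric] sweep_eps_def by simp
  have "V*r*(1-e) * ((R+r)*V) = r*(R+r)*V^2 - r * (e*((R+r)*V^2))"
    by (simp add: power2_eq_square algebra_simps)
  also have "\<dots> = r*(R+r)*V^2 - R*r*W^2"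
    using \<open>e * ((R+r)*V^2) = R*W^2\<close> by simp
  also have "\<dots> = 2*pi*(W*R) * ((R+r)*V)"
    using V_s2_quadratic[of r R W] assms unfolding V_def[symmetric] by (simp add: algebra_simps)
  finally have "V*r*(1-e) * ((R+r)*V) = 2*pi*(W*R) * ((R+r)*V)" .
  moreover have "(R+r)*V \<noteq> 0"
    using assms \<open>0 < V\<close> by simp
  ultimately have "V*r*(1-e) = 2*pi*(W*R)"
    using mult_right_cancel[of "(R+r)*V" "V*r*(1-e)" "2*pi*(W*R)"] by blast
  moreover from this have "1 - e \<noteq> 0"
    using assms by auto
  ultimately have "V*r/(W*R) = 2*pi/(1-e)"
    using assms by (simp add: frac_eq_eq)
  with sweep_f_eq[of R r W V t] assms \<open>0 < V\<close> show ?thesis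
    unfolding e_def V_def sweep_eps_def by simp
qed

lemma sweep_f_V_s2_pos:
  fixes R r W t :: real
  assumes "0 < r" "r \<le> R" "0 < W" "0 \<le> t" "t \<le> pi*R/(2*V_s2 R r W)"
  shows "0 < sweep_f R r W t (V_s2 R r W)"
proof -
  define V where "V = V_s2 R r W"
  define e where "e = sweep_eps R r W V"
  have "0 < R" "0 < V" using assms V_s2_pos[of r R W] by (simp_all add: V_def)
  have "0 \<le> V*t/R" using assms \<open>0 < R\<close> \<open>0 < V\<close> by simp
  have "V*t \<le> pi*R/2" using assms \<open>0 < V\<close> unfolding V_def by (simp add: field_simps)
  also have "\<dots> \<le> 2*R" using \<open>0 < R\<close> pi_half_less_two by simp
  finally have "V*t/R \<le> 2" using \<open>0 < R\<close> by (simp add: divide_simps)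
  have "0 < e" using assms \<open>0 < R\<close> \<open>0 < V\<close> by (simp add: e_def sweep_eps_def)
  moreover have "e < 1/6" using sweep_eps_V_s2_less[OF assms(1-3)] by (simp add: e_def V_def)
  ultimately have "0 < 1 - cos (V*t/R) + e/2 * ((2*pi/(1-e))^2 - (2*pi + V*t/R)^2)"
    using \<open>0 \<le> V*t/R\<close> \<open>V*t/R \<le> 2\<close> by (rule cos_margin_pos)
  also have "\<dots> = sweep_f R r W t V"
    using sweep_f_V_s2[of r R W t] assms \<open>0 < R\<close> by (simp add: e_def V_def)
  finally show ?thesis by (simp add: V_def)
qed

theorem theorem11:
  fixes r V\<^sub>T R\<^sub>0 :: real
  assumes "r > 0" and "V\<^sub>T > 0" and "R\<^sub>0 \<ge> r"
  shows "(\<exists>ts\<in>{0 .. pi * R\<^sub>0 / (2 * V_s2 R\<^sub>0 r V\<^sub>T)}.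
            (\<forall>t\<in>{0 .. pi * R\<^sub>0 / (2 * V_s2 R\<^sub>0 r V\<^sub>T)}.
               sweep_f R\<^sub>0 r V\<^sub>T ts (V_s2 R\<^sub>0 r V\<^sub>T) \<le> sweep_f R\<^sub>0 r V\<^sub>T t (V_s2 R\<^sub>0 r V\<^sub>T))
            \<and> sweep_f R\<^sub>0 r V\<^sub>T ts (V_s2 R\<^sub>0 r V\<^sub>T) > 0)
       \<and> (\<forall>t\<in>{0 .. pi * R\<^sub>0 / (2 * V_s2 R\<^sub>0 r V\<^sub>T)}. sweep_f R\<^sub>0 r V\<^sub>T t (V_s2 R\<^sub>0 r V\<^sub>T) \<ge> 0)"
proof -
  define V where "V = V_s2 R\<^sub>0 r V\<^sub>T"
  define T where "T = pi * R\<^sub>0 / (2 * V)"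
  have pos: "0 < sweep_f R\<^sub>0 r V\<^sub>T t V" if "t \<in> {0..T}" for t
    using sweep_f_V_s2_pos[of r R\<^sub>0 V\<^sub>T t] assms that unfolding T_def V_def by simp
  have "continuous_on {0..T} (\<lambda>t. sweep_f R\<^sub>0 r V\<^sub>T t V)"
    unfolding sweep_f_def using assms by (intro continuous_intros) auto
  moreover have "{0..T} \<noteq> {}"
    using assms V_s2_pos[of r R\<^sub>0 V\<^sub>T] unfolding T_def V_def by simp
  ultimately obtain ts where "ts \<in> {0..T}" "\<forall>t\<in>{0..T}. sweep_f R\<^sub>0 r V\<^sub>T ts V \<le> sweep_f R\<^sub>0 r V\<^sub>T t V"
    using continuous_attains_inf[OF compact_Icc] by blast
  with pos show ?thesis unfolding T_def V_def by (meson less_imp_le)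
qed

end
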